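(* Let $\Gamma$ be a $\Bbbk$-algebra, $\sim$ an equivalence relation on $\mathrm{cfs}(\Gamma)$, and $B\in\mathrm{cfs}(\Gamma)/{\sim}$. Then the Jacobson radical of $\hat\Gamma_B$ is $\mathrm{Rad}(\hat\Gamma_B)=\bigcap_{\mathfrak m\in B}\ker(\pi_{\mathfrak m})$.
   Context: $\mathrm{cfs}(\Gamma)$: maximal two-sided ideals $\mathfrak m$ with $\dim\Gamma/\mathfrak m<\infty$. For a class $B$, $\mathcal W(B)=\{\mathfrak m_1\cdots\mathfrak m_k:k\ge0,\mathfrak m_i\in B\}$, directed by reverse inclusion. $\hat\Gamma_B=\varprojlim_{\mathfrak m\in\mathcal W(B)}\Gamma/\mathfrak m$, and $\pi_{\mathfrak m}:\hat\Gamma_B\to\Gamma/\mathfrak m$ is the canonical projection. *)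

theory Defs
  imports Main "HOL.Vector_Spaces" "HOL-Algebra.Ring"
begin

definition k_algebra :: "('k::field \<Rightarrow> 'a::ring_1 \<Rightarrow> 'a) \<Rightarrow> bool" where
  "k_algebra scale \<longleftrightarrow> Vector_Spaces.vector_space scale \<and>
     (\<forall>c x y. scale c (x * y) = scale c x * y \<and> scale c (x * y) = x * scale c y)"

definition two_sided_ideal :: "'a::ring_1 set \<Rightarrow> bool" where
  "two_sided_ideal I \<longleftrightarrow> 0 \<in> I \<and> (\<forall>x\<in>I. \<forall>y\<in>I. x + y \<in> I) \<and> (\<forall>x\<in>I. - x \<in> I)
     \<and> (\<forall>x\<in>I. \<forall>a. a * x \<in> I \<and> x * a \<in> I)"

definition maximal_two_sided_ideal :: "'a::ring_1 set \<Rightarrow> bool" where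
  "maximal_two_sided_ideal M \<longleftrightarrow> two_sided_ideal M \<and> M \<noteq> UNIV \<and>
     (\<forall>J. two_sided_ideal J \<and> M \<subseteq> J \<longrightarrow> J = M \<or> J = UNIV)"

text \<open>dim (Gamma / m) finite: Gamma = span S + m for some finite set S.\<close>
definition finite_codim :: "('k::field \<Rightarrow> 'a::ring_1 \<Rightarrow> 'a) \<Rightarrow> 'a set \<Rightarrow> bool" where
  "finite_codim scale M \<longleftrightarrow> (\<exists>S. finite S \<and> (\<forall>x. \<exists>s\<in>Modules.module.span scale S. x - s \<in> M))"

definition cfs :: "('k::field \<Rightarrow> 'a::ring_1 \<Rightarrow> 'a) \<Rightarrow> 'a set set" where
  "cfs scale = {M. maximal_two_sided_ideal M \<and> finite_codim scale M}"

definition ideal_mult :: "'a::ring_1 set \<Rightarrow> 'a set \<Rightarrow> 'a set" where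
  "ideal_mult I J = {z. \<exists>(n::nat) f g. (\<forall>i<n. f i \<in> I \<and> g i \<in> J) \<and> z = (\<Sum>i<n. f i * g i)}"

definition ideal_prod_list :: "'a::ring_1 set list \<Rightarrow> 'a set" where
  "ideal_prod_list ms = foldr ideal_mult ms UNIV"

definition W :: "'a::ring_1 set set \<Rightarrow> 'a set set" where
  "W B = {ideal_prod_list ms | ms. set ms \<subseteq> B}"

text \<open>Elements of Gamma/I are represented as cosets a + I.\<close>
definition coset_of :: "'a::ring_1 set \<Rightarrow> 'a \<Rightarrow> 'a set" where
  "coset_of I a = {x. x - a \<in> I}"

text \<open>An element of the inverse limit is a family (c I) over I in W(B) with c I in Gamma/I,
  compatible with the canonical projections Gamma/I \<rightarrow> Gamma/J for I \<subseteq> J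
  (i.e. J \<le> I in the reverse-inclusion order); the projection sends a+I to a+J, so
  compatibility means c I \<subseteq> c J. Outside W(B) the family is {}.\<close>
definition completion_carrier :: "'a::ring_1 set set \<Rightarrow> ('a set \<Rightarrow> 'a set) set" where
  "completion_carrier B = {c.
     (\<forall>I. I \<in> W B \<longrightarrow> (\<exists>a. c I = coset_of I a)) \<and>
     (\<forall>I. I \<notin> W B \<longrightarrow> c I = {}) \<and>
     (\<forall>I J. I \<in> W B \<longrightarrow> J \<in> W B \<longrightarrow> I \<subseteq> J \<longrightarrow> c I \<subseteq> c J)}"

definition completion :: "'a::ring_1 set set \<Rightarrow> ('a set \<Rightarrow> 'a set) ring" where
  "completion B = \<lparr>carrier = completion_carrier B,
     monoid.mult = (\<lambda>c d I. if I \<in> W B then {z. \<exists>x\<in>c I. \<exists>y\<in>d I. z - x * y \<in> I} else {}),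
     one = (\<lambda>I. if I \<in> W B then coset_of I 1 else {}),
     zero = (\<lambda>I. if I \<in> W B then coset_of I 0 else {}),
     add = (\<lambda>c d I. if I \<in> W B then {z. \<exists>x\<in>c I. \<exists>y\<in>d I. z - (x + y) \<in> I} else {})\<rparr>"

definition proj :: "'a::ring_1 set \<Rightarrow> ('a set \<Rightarrow> 'a set) \<Rightarrow> 'a set" where
  "proj M c = c M"

definition proj_kernel :: "'a::ring_1 set set \<Rightarrow> 'a set \<Rightarrow> ('a set \<Rightarrow> 'a set) set" where
  "proj_kernel B M = {c \<in> completion_carrier B. proj M c = coset_of M 0}"

definition left_ideal :: "('r, 'm) ring_scheme \<Rightarrow> 'r set \<Rightarrow> bool" where
  "left_ideal R L \<longleftrightarrow> L \<subseteq> carrier R \<and> \<zero>\<^bsub>R\<^esub> \<in> L \<and>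
     (\<forall>x\<in>L. \<forall>y\<in>L. x \<oplus>\<^bsub>R\<^esub> y \<in> L) \<and> (\<forall>x\<in>L. \<ominus>\<^bsub>R\<^esub> x \<in> L) \<and>
     (\<forall>a\<in>carrier R. \<forall>x\<in>L. a \<otimes>\<^bsub>R\<^esub> x \<in> L)"

definition maximal_left_ideal :: "('r, 'm) ring_scheme \<Rightarrow> 'r set \<Rightarrow> bool" where
  "maximal_left_ideal R L \<longleftrightarrow> left_ideal R L \<and> L \<noteq> carrier R \<and>
     (\<forall>J. left_ideal R J \<and> L \<subseteq> J \<longrightarrow> J = L \<or> J = carrier R)"

definition jacobson_radical :: "('r, 'm) ring_scheme \<Rightarrow> 'r set" where
  "jacobson_radical R = carrier R \<inter> \<Inter> {L. maximal_left_ideal R L}"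

end

theory Submission
  imports Defs
begin

text \<open>
  Represent an element of the completion by a compatible family of representatives \<open>f I\<close>,
  \<open>I \<in> W(B)\<close>, and use that \<open>x\<close> lies in the Jacobson radical iff \<open>1 - a x\<close> is left
  invertible for every \<open>a\<close>.

  If \<open>f M \<in> M\<close> for all \<open>M \<in> B\<close>, then for \<open>I = M\<^sub>1 \<cdots> M\<^sub>k\<close> compatibility puts \<open>f I\<close>
  into every \<open>M\<^sub>i\<close>, so \<open>(f I)\<^sup>k \<in> I\<close>; hence \<open>1 - a f\<close> is inverted componentwise by a
  finite geometric series, and \<open>f\<close> is in the radical. Conversely, if \<open>c\<close> is in the radical
  but \<open>c\<^sub>M \<notin> M\<close>, maximality of \<open>M\<close> gives \<open>1 = m + \<Sum> x\<^sub>i c\<^sub>M y\<^sub>i\<close> with \<open>m \<in> M\<close>. Since the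
  radical is a two-sided ideal, \<open>z = \<Sum> x\<^sub>i c y\<^sub>i\<close> lies in it, so \<open>1 - z\<close> has a left inverse;
  but the \<open>M\<close>-component of \<open>1 - z\<close> is \<open>m \<in> M\<close>, forcing \<open>1 \<in> M\<close>.
\<close>

section \<open>Two-sided ideals\<close>

lemma two_sided_ideal_UNIV: "two_sided_ideal (UNIV :: 'a::ring_1 set)"
  by (simp add: two_sided_ideal_def)

context
  fixes I :: "'a::ring_1 set"
  assumes I: "two_sided_ideal I"
begin

lemma two_sided_ideal_zero: "0 \<in> I"
  using I unfolding two_sided_ideal_def by blast

lemma two_sided_ideal_add: "x \<in> I \<Longrightarrow> y \<in> I \<Longrightarrow> x + y \<in> I"
  using I unfolding two_sided_ideal_def by blast

lemma two_sided_ideal_uminus: "x \<in> I \<Longrightarrow> - x \<in> I"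
  using I unfolding two_sided_ideal_def by blast

lemma two_sided_ideal_diff: "x \<in> I \<Longrightarrow> y \<in> I \<Longrightarrow> x - y \<in> I"
  using two_sided_ideal_add two_sided_ideal_uminus by (metis diff_conv_add_uminus)

lemma two_sided_ideal_mult_left: "x \<in> I \<Longrightarrow> a * x \<in> I"
  using I unfolding two_sided_ideal_def by blast

lemma two_sided_ideal_mult_right: "x \<in> I \<Longrightarrow> x * a \<in> I"
  using I unfolding two_sided_ideal_def by blast

lemma two_sided_ideal_sum: "(\<And>i. i < (n::nat) \<Longrightarrow> f i \<in> I) \<Longrightarrow> (\<Sum>i<n. f i) \<in> I"
  by (induction n) (auto simp: two_sided_ideal_zero two_sided_ideal_add)

lemma two_sided_ideal_eq_UNIV_iff: "I = UNIV \<longleftrightarrow> 1 \<in> I"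
  using two_sided_ideal_mult_left[of 1] by auto

lemma coset_of_eq_iff: "coset_of I a = coset_of I b \<longleftrightarrow> a - b \<in> I"
proof
  assume "coset_of I a = coset_of I b"
  moreover have "a \<in> coset_of I a"
    by (simp add: coset_of_def two_sided_ideal_zero)
  ultimately show "a - b \<in> I"
    by (simp add: coset_of_def)
next
  assume "a - b \<in> I"
  then have "x - a \<in> I \<longleftrightarrow> x - b \<in> I" for x
    using two_sided_ideal_add[of "x - a" "a - b"] two_sided_ideal_diff[of "x - b" "a - b"] by auto
  then show "coset_of I a = coset_of I b"
    by (simp add: coset_of_def)
qed

lemma coset_of_add: "{z. \<exists>x\<in>coset_of I a. \<exists>y\<in>coset_of I b. z - (x + y) \<in> I} = coset_of I (a + b)"
proof (intro equalityI subsetI)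
  fix z assume "z \<in> {z. \<exists>x\<in>coset_of I a. \<exists>y\<in>coset_of I b. z - (x + y) \<in> I}"
  then obtain x y where "x - a \<in> I" "y - b \<in> I" "z - (x + y) \<in> I"
    by (auto simp: coset_of_def)
  then have "(z - (x + y)) + ((x - a) + (y - b)) \<in> I"
    by (intro two_sided_ideal_add)
  then show "z \<in> coset_of I (a + b)"
    by (simp add: coset_of_def algebra_simps)
qed (use two_sided_ideal_zero in \<open>fastforce simp: coset_of_def\<close>)

lemma coset_of_mult: "{z. \<exists>x\<in>coset_of I a. \<exists>y\<in>coset_of I b. z - x * y \<in> I} = coset_of I (a * b)"
proof (intro equalityI subsetI)
  fix z assume "z \<in> {z. \<exists>x\<in>coset_of I a. \<exists>y\<in>coset_of I b. z - x * y \<in> I}"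
  then obtain x y where "x - a \<in> I" "y - b \<in> I" "z - x * y \<in> I"
    by (auto simp: coset_of_def)
  then have "(z - x * y) + ((x - a) * y + a * (y - b)) \<in> I"
    by (intro two_sided_ideal_add two_sided_ideal_mult_left two_sided_ideal_mult_right)
  then show "z \<in> coset_of I (a * b)"
    by (simp add: coset_of_def algebra_simps)
qed (use two_sided_ideal_zero in \<open>fastforce simp: coset_of_def\<close>)

end

lemma sum_lessThan_add_split:
  fixes F :: "nat \<Rightarrow> 'a::comm_monoid_add"
  shows "(\<Sum>i<m + n. F i) = (\<Sum>i<m. F i) + (\<Sum>i<n. F (m + i))"
  by (induction n) (auto simp: add.assoc)

lemma ideal_multI:
  assumes "\<And>i. i < (n::nat) \<Longrightarrow> f i \<in> I \<and> g i \<in> J"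
  shows "(\<Sum>i<n. f i * g i) \<in> ideal_mult I J"
  using assms unfolding ideal_mult_def by blast

lemma ideal_mult_closed: "x \<in> I \<Longrightarrow> y \<in> J \<Longrightarrow> x * y \<in> ideal_mult I J"
  unfolding ideal_mult_def by (intro CollectI exI[of _ 1] exI[of _ "\<lambda>_. x"] exI[of _ "\<lambda>_. y"]) auto

lemma two_sided_ideal_ideal_mult:
  assumes I: "two_sided_ideal I" and J: "two_sided_ideal J"
  shows "two_sided_ideal (ideal_mult I J)"
  unfolding two_sided_ideal_def
proof (intro conjI ballI allI)
  show "0 \<in> ideal_mult I J"
    using ideal_multI[of 0 "\<lambda>_. 0" I "\<lambda>_. 0" J] by simp
next
  fix x y assume "x \<in> ideal_mult I J" "y \<in> ideal_mult I J"
  then obtain m n :: nat and f g f' g'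
    where x: "\<forall>i<m. f i \<in> I \<and> g i \<in> J" "x = (\<Sum>i<m. f i * g i)"
      and y: "\<forall>i<n. f' i \<in> I \<and> g' i \<in> J" "y = (\<Sum>i<n. f' i * g' i)"
    unfolding ideal_mult_def by blast
  let ?f = "\<lambda>i. if i < m then f i else f' (i - m)" and ?g = "\<lambda>i. if i < m then g i else g' (i - m)"
  have "x + y = (\<Sum>i<m + n. ?f i * ?g i)"
    unfolding sum_lessThan_add_split x y by simp
  also have "\<dots> \<in> ideal_mult I J"
    using x y by (intro ideal_multI) auto
  finally show "x + y \<in> ideal_mult I J" .
next
  fix x a assume "x \<in> ideal_mult I J"
  then obtain n :: nat and f g where x: "\<forall>i<n. f i \<in> I \<and> g i \<in> J" "x = (\<Sum>i<n. f i * g i)"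
    unfolding ideal_mult_def by blast
  have "- x = (\<Sum>i<n. (- f i) * g i)"
    by (simp add: x sum_negf)
  also have "\<dots> \<in> ideal_mult I J"
    using x two_sided_ideal_uminus[OF I] by (intro ideal_multI) auto
  finally show "- x \<in> ideal_mult I J" .
  have "a * x = (\<Sum>i<n. (a * f i) * g i)"
    by (simp add: x sum_distrib_left mult.assoc)
  also have "\<dots> \<in> ideal_mult I J"
    using x two_sided_ideal_mult_left[OF I] by (intro ideal_multI) auto
  finally show "a * x \<in> ideal_mult I J" .
  have "x * a = (\<Sum>i<n. f i * (g i * a))"
    by (simp add: x sum_distrib_right mult.assoc)
  also have "\<dots> \<in> ideal_mult I J"
    using x two_sided_ideal_mult_right[OF J] by (intro ideal_multI) auto
  finally show "x * a \<in> ideal_mult I J" .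
qed

lemma ideal_mult_subset_left: "two_sided_ideal I \<Longrightarrow> ideal_mult I J \<subseteq> I"
  unfolding ideal_mult_def by (auto intro!: two_sided_ideal_sum two_sided_ideal_mult_right)

lemma ideal_mult_subset_right: "two_sided_ideal J \<Longrightarrow> ideal_mult I J \<subseteq> J"
  unfolding ideal_mult_def by (auto intro!: two_sided_ideal_sum two_sided_ideal_mult_left)

lemma ideal_mult_UNIV_right: "two_sided_ideal I \<Longrightarrow> ideal_mult I UNIV = I"
  using ideal_mult_subset_left ideal_mult_closed[of _ I 1 UNIV] by force

lemma two_sided_ideal_ideal_prod_list:
  "(\<And>M. M \<in> set ms \<Longrightarrow> two_sided_ideal M) \<Longrightarrow> two_sided_ideal (ideal_prod_list ms)"
  unfolding ideal_prod_list_def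
  by (induction ms) (auto simp: two_sided_ideal_UNIV two_sided_ideal_ideal_mult)

lemma ideal_prod_list_subset:
  assumes "\<And>M. M \<in> set ms \<Longrightarrow> two_sided_ideal M" and "M \<in> set ms"
  shows "ideal_prod_list ms \<subseteq> M"
  using assms
proof (induction ms)
  case (Cons N ms)
  then show ?case
    using ideal_mult_subset_left[of N] ideal_mult_subset_right[of "ideal_prod_list ms"]
      two_sided_ideal_ideal_prod_list[of ms]
    by (fastforce simp: ideal_prod_list_def)
qed simp

lemma power_in_ideal_prod_list:
  "(\<And>M. M \<in> set ms \<Longrightarrow> x \<in> M) \<Longrightarrow> x ^ length ms \<in> ideal_prod_list ms"
  by (induction ms) (simp_all add: ideal_prod_list_def ideal_mult_closed)

definition ideal_adjoin :: "'a::ring_1 set \<Rightarrow> 'a \<Rightarrow> 'a set" where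
  "ideal_adjoin M a = {m + (\<Sum>i<(k::nat). x i * a * y i) | m k x y. m \<in> M}"

lemma ideal_adjoinI: "m \<in> M \<Longrightarrow> m + (\<Sum>i<(k::nat). x i * a * y i) \<in> ideal_adjoin M a"
  unfolding ideal_adjoin_def by blast

lemma ideal_adjoinE:
  assumes "z \<in> ideal_adjoin M a"
  obtains m k x y where "m \<in> M" "z = m + (\<Sum>i<(k::nat). x i * a * y i)"
  using assms unfolding ideal_adjoin_def by blast

lemma two_sided_ideal_ideal_adjoin:
  assumes M: "two_sided_ideal M"
  shows "two_sided_ideal (ideal_adjoin M a)"
  unfolding two_sided_ideal_def
proof (intro conjI ballI allI)
  show "0 \<in> ideal_adjoin M a"
    using ideal_adjoinI[OF two_sided_ideal_zero[OF M], where k=0] by simp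
next
  fix z z' assume "z \<in> ideal_adjoin M a" "z' \<in> ideal_adjoin M a"
  then obtain m k x y m' k' x' y' where z: "m \<in> M" "z = m + (\<Sum>i<(k::nat). x i * a * y i)"
    and z': "m' \<in> M" "z' = m' + (\<Sum>i<(k'::nat). x' i * a * y' i)"
    by (metis ideal_adjoinE)
  let ?x = "\<lambda>i. if i < k then x i else x' (i - k)" and ?y = "\<lambda>i. if i < k then y i else y' (i - k)"
  have "z + z' = (m + m') + (\<Sum>i<k + k'. ?x i * a * ?y i)"
    unfolding sum_lessThan_add_split z z' by (simp add: algebra_simps)
  also have "\<dots> \<in> ideal_adjoin M a"
    by (rule ideal_adjoinI[OF two_sided_ideal_add[OF M z(1) z'(1)]])
  finally show "z + z' \<in> ideal_adjoin M a" .
next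
  fix z b assume "z \<in> ideal_adjoin M a"
  then obtain m k x y where z: "m \<in> M" "z = m + (\<Sum>i<(k::nat). x i * a * y i)"
    by (rule ideal_adjoinE)
  have "- z = - m + (\<Sum>i<k. (- x i) * a * y i)"
    by (simp add: z sum_negf)
  also have "\<dots> \<in> ideal_adjoin M a"
    by (rule ideal_adjoinI[OF two_sided_ideal_uminus[OF M z(1)]])
  finally show "- z \<in> ideal_adjoin M a" .
  have "b * z = b * m + (\<Sum>i<k. (b * x i) * a * y i)"
    by (simp add: z sum_distrib_left distrib_left mult.assoc)
  also have "\<dots> \<in> ideal_adjoin M a"
    by (rule ideal_adjoinI[OF two_sided_ideal_mult_left[OF M z(1)]])
  finally show "b * z \<in> ideal_adjoin M a" .
  have "z * b = m * b + (\<Sum>i<k. x i * a * (y i * b))"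
    by (simp add: z sum_distrib_right distrib_right mult.assoc)
  also have "\<dots> \<in> ideal_adjoin M a"
    by (rule ideal_adjoinI[OF two_sided_ideal_mult_right[OF M z(1)]])
  finally show "z * b \<in> ideal_adjoin M a" .
qed

lemma maximal_two_sided_ideal_generates_one:
  assumes M: "maximal_two_sided_ideal M" and a: "a \<notin> M"
  obtains m k x y where "m \<in> M" "1 = m + (\<Sum>i<(k::nat). x i * a * y i)"
proof -
  have "two_sided_ideal M"
    using M unfolding maximal_two_sided_ideal_def by blast
  then have "two_sided_ideal (ideal_adjoin M a)"
    by (rule two_sided_ideal_ideal_adjoin)
  moreover have "M \<subseteq> ideal_adjoin M a"
    using ideal_adjoinI[where k=0] by auto
  moreover have "a \<in> ideal_adjoin M a"
    using ideal_adjoinI[OF two_sided_ideal_zero[OF \<open>two_sided_ideal M\<close>], where k=1 and x="\<lambda>_. 1" and y="\<lambda>_. 1"]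
    by simp
  ultimately have "1 \<in> ideal_adjoin M a"
    using M a unfolding maximal_two_sided_ideal_def by blast
  then show ?thesis
    using that by (rule ideal_adjoinE)
qed

lemma geometric_sum_mult_right: "(\<Sum>i<n. (x::'a::ring_1) ^ i) * (1 - x) = 1 - x ^ n"
proof (induction n)
  case (Suc n)
  have "(\<Sum>i<Suc n. x ^ i) * (1 - x) = (\<Sum>i<n. x ^ i) * (1 - x) + (x ^ n - x ^ n * x)"
    by (simp add: algebra_simps)
  then show ?case
    using Suc by (simp add: power_Suc2 power_commutes)
qed simp

lemma geometric_sum_mult_left: "(1 - x) * (\<Sum>i<n. (x::'a::ring_1) ^ i) = 1 - x ^ n"
proof (induction n)
  case (Suc n)
  have "(1 - x) * (\<Sum>i<Suc n. x ^ i) = (1 - x) * (\<Sum>i<n. x ^ i) + (x ^ n - x * x ^ n)"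
    by (simp add: algebra_simps)
  then show ?case
    using Suc by simp
qed simp

lemma left_right_inverse_mod_eq:
  assumes J: "two_sided_ideal J" and "u * a - 1 \<in> J" "a * v - 1 \<in> J"
  shows "u - v \<in> J"
proof -
  have "(u * a - 1) * v - u * (a * v - 1) \<in> J"
    using assms
    by (blast intro: two_sided_ideal_diff[OF J] two_sided_ideal_mult_left[OF J] two_sided_ideal_mult_right[OF J])
  then show ?thesis
    by (simp add: algebra_simps)
qed

section \<open>Left ideals and the Jacobson radical\<close>

context ring
begin

lemma left_idealI:
  assumes "L \<subseteq> carrier R" "\<zero> \<in> L" "\<And>x y. x \<in> L \<Longrightarrow> y \<in> L \<Longrightarrow> x \<oplus> y \<in> L"
    and "\<And>a x. a \<in> carrier R \<Longrightarrow> x \<in> L \<Longrightarrow> a \<otimes> x \<in> L"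
  shows "left_ideal R L"
  unfolding left_ideal_def
proof (intro conjI ballI assms)
  fix x assume "x \<in> L"
  with assms have "\<ominus> \<one> \<otimes> x \<in> L" "x \<in> carrier R"
    by auto
  then show "\<ominus> x \<in> L"
    using l_minus[of \<one> x] by simp
qed

context
  fixes L
  assumes L: "left_ideal R L"
begin

lemma left_ideal_subset_carrier: "L \<subseteq> carrier R"
  using L unfolding left_ideal_def by blast

lemma left_ideal_zero: "\<zero> \<in> L"
  using L unfolding left_ideal_def by blast

lemma left_ideal_add: "x \<in> L \<Longrightarrow> y \<in> L \<Longrightarrow> x \<oplus> y \<in> L"
  using L unfolding left_ideal_def by blast

lemma left_ideal_mult: "a \<in> carrier R \<Longrightarrow> x \<in> L \<Longrightarrow> a \<otimes> x \<in> L"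
  using L unfolding left_ideal_def by blast

lemma left_ideal_eq_carrier_iff_one: "L = carrier R \<longleftrightarrow> \<one> \<in> L"
  using left_ideal_subset_carrier left_ideal_mult[of _ \<one>] by force

lemma left_ideal_add_left_multiples:
  assumes b: "b \<in> carrier R"
  shows "left_ideal R {l \<oplus> a \<otimes> b | l a. l \<in> L \<and> a \<in> carrier R}"
proof (rule left_idealI)
  show "\<zero> \<in> {l \<oplus> a \<otimes> b | l a. l \<in> L \<and> a \<in> carrier R}"
    using b left_ideal_zero by (force intro!: exI[of _ \<zero>])
next
  fix x y assume "x \<in> {l \<oplus> a \<otimes> b | l a. l \<in> L \<and> a \<in> carrier R}"
    "y \<in> {l \<oplus> a \<otimes> b | l a. l \<in> L \<and> a \<in> carrier R}"
  then obtain l a l' a' where "x = l \<oplus> a \<otimes> b" "y = l' \<oplus> a' \<otimes> b"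
    and la: "l \<in> L" "l' \<in> L" "a \<in> carrier R" "a' \<in> carrier R"
    by blast
  moreover have "l \<in> carrier R" "l' \<in> carrier R"
    using la left_ideal_subset_carrier by blast+
  ultimately have "x \<oplus> y = (l \<oplus> l') \<oplus> (a \<oplus> a') \<otimes> b"
    using b by (simp add: l_distr a_ac)
  then show "x \<oplus> y \<in> {l \<oplus> a \<otimes> b | l a. l \<in> L \<and> a \<in> carrier R}"
    using la left_ideal_add by blast
next
  fix c x assume c: "c \<in> carrier R" and "x \<in> {l \<oplus> a \<otimes> b | l a. l \<in> L \<and> a \<in> carrier R}"
  then obtain l a where "x = l \<oplus> a \<otimes> b" and la: "l \<in> L" "a \<in> carrier R"
    by blast
  moreover have "l \<in> carrier R"
    using la left_ideal_subset_carrier by blast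
  ultimately have "c \<otimes> x = c \<otimes> l \<oplus> (c \<otimes> a) \<otimes> b"
    using b c by (simp add: r_distr m_assoc)
  then show "c \<otimes> x \<in> {l \<oplus> a \<otimes> b | l a. l \<in> L \<and> a \<in> carrier R}"
    using la c left_ideal_mult by blast
qed (use b left_ideal_subset_carrier in auto)

end

lemma maximal_left_ideal_one_notin: "maximal_left_ideal R L \<Longrightarrow> \<one> \<notin> L"
  unfolding maximal_left_ideal_def using left_ideal_eq_carrier_iff_one by blast

lemma left_ideal_Union_chain:
  assumes "C \<noteq> {}" "\<And>J. J \<in> C \<Longrightarrow> left_ideal R J" "subset.chain UNIV C"
  shows "left_ideal R (\<Union>C)"
proof (rule left_idealI)
  show "\<Union>C \<subseteq> carrier R" "\<zero> \<in> \<Union>C"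
    using assms left_ideal_subset_carrier left_ideal_zero by blast+
next
  fix x y assume "x \<in> \<Union>C" "y \<in> \<Union>C"
  then obtain X Y where XY: "X \<in> C" "Y \<in> C" "x \<in> X" "y \<in> Y"
    by blast
  have "X \<union> Y \<in> C"
    using XY(1,2) assms(3) unfolding subset_chain_def by (metis Un_absorb1 Un_absorb2)
  then show "x \<oplus> y \<in> \<Union>C"
    using XY assms(2) left_ideal_add[of "X \<union> Y" x y] by blast
next
  fix a x assume "a \<in> carrier R" "x \<in> \<Union>C"
  then show "a \<otimes> x \<in> \<Union>C"
    using assms(2) left_ideal_mult by blast
qed

lemma exists_maximal_left_ideal:
  assumes I: "left_ideal R I" "\<one> \<notin> I"
  obtains L where "maximal_left_ideal R L" "I \<subseteq> L"
proof -
  define A where "A = {J. left_ideal R J \<and> I \<subseteq> J \<and> \<one> \<notin> J}"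
  have "\<exists>M\<in>A. \<forall>X\<in>A. M \<subseteq> X \<longrightarrow> X = M"
  proof (rule subset_Zorn_nonempty)
    show "A \<noteq> {}"
      using I unfolding A_def by blast
  next
    fix C assume C: "C \<noteq> {}" "subset.chain A C"
    then have "left_ideal R (\<Union>C)"
      by (intro left_ideal_Union_chain) (auto simp: A_def subset_chain_def)
    then show "\<Union>C \<in> A"
      using C unfolding A_def subset_chain_def by blast
  qed
  then obtain M where M: "M \<in> A" "\<And>X. X \<in> A \<Longrightarrow> M \<subseteq> X \<Longrightarrow> X = M"
    by blast
  have "maximal_left_ideal R M"
    unfolding maximal_left_ideal_def
    using M left_ideal_eq_carrier_iff_one unfolding A_def by blast
  then show ?thesis
    using M(1) that unfolding A_def by blast
qed

lemma zero_left_ideal: "left_ideal R {\<zero>}"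
  by (rule left_idealI) auto

lemma maximal_left_ideal_left_ideal: "maximal_left_ideal R L \<Longrightarrow> left_ideal R L"
  unfolding maximal_left_ideal_def by blast

lemma jacobson_radical_subset_carrier: "jacobson_radical R \<subseteq> carrier R"
  unfolding jacobson_radical_def by blast

lemma jacobson_radical_left_invertible:
  assumes x: "x \<in> jacobson_radical R" and a: "a \<in> carrier R"
  shows "\<exists>u\<in>carrier R. u \<otimes> (\<one> \<ominus> a \<otimes> x) = \<one>"
proof (rule ccontr)
  let ?b = "\<one> \<ominus> a \<otimes> x"
  let ?I = "{l \<oplus> u \<otimes> ?b | l u. l \<in> {\<zero>} \<and> u \<in> carrier R}"
  assume no_inverse: "\<not> (\<exists>u\<in>carrier R. u \<otimes> ?b = \<one>)"
  have xc: "x \<in> carrier R"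
    using x jacobson_radical_subset_carrier by blast
  then have bc: "?b \<in> carrier R"
    using a by simp
  have "left_ideal R ?I"
    by (rule left_ideal_add_left_multiples[OF zero_left_ideal bc])
  moreover have "\<one> \<notin> ?I"
    using no_inverse bc by auto
  ultimately obtain L where L: "maximal_left_ideal R L" "?I \<subseteq> L"
    using exists_maximal_left_ideal by blast
  note L_left_ideal = maximal_left_ideal_left_ideal[OF L(1)]
  have "?b = \<zero> \<oplus> \<one> \<otimes> ?b"
    using bc by simp
  then have "?b \<in> L"
    using L(2) by blast
  moreover have "a \<otimes> x \<in> L"
    using x a L(1) left_ideal_mult[OF L_left_ideal] unfolding jacobson_radical_def by blast
  ultimately have "?b \<oplus> a \<otimes> x \<in> L"
    by (rule left_ideal_add[OF L_left_ideal])
  moreover have "?b \<oplus> a \<otimes> x = \<one>"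
    using a xc by (simp add: a_minus_def a_assoc l_neg)
  ultimately show False
    using maximal_left_ideal_one_notin[OF L(1)] by simp
qed

lemma jacobson_radicalI_left_invertible:
  assumes x: "x \<in> carrier R"
    and inv: "\<And>a. a \<in> carrier R \<Longrightarrow> \<exists>u\<in>carrier R. u \<otimes> (\<one> \<ominus> a \<otimes> x) = \<one>"
  shows "x \<in> jacobson_radical R"
proof -
  have "x \<in> L" if L: "maximal_left_ideal R L" for L
  proof (rule ccontr)
    assume "x \<notin> L"
    note L_left_ideal = maximal_left_ideal_left_ideal[OF L]
    define T where "T = {l \<oplus> a \<otimes> x | l a. l \<in> L \<and> a \<in> carrier R}"
    have "l = l \<oplus> \<zero> \<otimes> x" if "l \<in> L" for l
      using that x left_ideal_subset_carrier[OF L_left_ideal] by auto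
    then have "L \<subseteq> T"
      unfolding T_def by blast
    moreover have "x = \<zero> \<oplus> \<one> \<otimes> x"
      using x by simp
    then have "x \<in> T"
      unfolding T_def using left_ideal_zero[OF L_left_ideal] by blast
    moreover have "left_ideal R T"
      unfolding T_def by (rule left_ideal_add_left_multiples[OF L_left_ideal x])
    ultimately have "T = carrier R"
      using L \<open>x \<notin> L\<close> unfolding maximal_left_ideal_def by blast
    then obtain l a where la: "\<one> = l \<oplus> a \<otimes> x" "l \<in> L" "a \<in> carrier R"
      unfolding T_def by blast
    have "l \<in> carrier R"
      using la(2) left_ideal_subset_carrier[OF L_left_ideal] by blast
    then have "l = \<one> \<ominus> a \<otimes> x"
      using la x by (simp add: a_minus_def a_assoc r_neg)
    moreover obtain u where "u \<in> carrier R" "u \<otimes> (\<one> \<ominus> a \<otimes> x) = \<one>"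
      using inv la(3) by blast
    ultimately have "\<one> \<in> L"
      using left_ideal_mult[OF L_left_ideal _ la(2)] by metis
    then show False
      using maximal_left_ideal_one_notin[OF L] by blast
  qed
  then show ?thesis
    using x unfolding jacobson_radical_def by blast
qed

lemma jacobson_radical_one_minus_left_invertible:
  assumes "x \<in> jacobson_radical R"
  shows "\<exists>u\<in>carrier R. u \<otimes> (\<one> \<ominus> x) = \<one>"
proof -
  have "x \<in> carrier R"
    using assms jacobson_radical_subset_carrier by blast
  then show ?thesis
    using jacobson_radical_left_invertible[OF assms one_closed] by simp
qed

lemma jacobson_radical_zero: "\<zero> \<in> jacobson_radical R"
  unfolding jacobson_radical_def maximal_left_ideal_def using left_ideal_zero by blast

lemma jacobson_radical_add:
  "x \<in> jacobson_radical R \<Longrightarrow> y \<in> jacobson_radical R \<Longrightarrow> x \<oplus> y \<in> jacobson_radical R"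
  unfolding jacobson_radical_def maximal_left_ideal_def using left_ideal_add by auto

lemma jacobson_radical_mult_left:
  "a \<in> carrier R \<Longrightarrow> x \<in> jacobson_radical R \<Longrightarrow> a \<otimes> x \<in> jacobson_radical R"
  unfolding jacobson_radical_def maximal_left_ideal_def using left_ideal_mult by auto

lemma one_minus_left_invertible_swap:
  assumes "y \<in> carrier R" "z \<in> carrier R" "u \<in> carrier R" and "u \<otimes> (\<one> \<ominus> y \<otimes> z) = \<one>"
  shows "(\<one> \<oplus> z \<otimes> u \<otimes> y) \<otimes> (\<one> \<ominus> z \<otimes> y) = \<one>"
proof -
  have "(\<one> \<oplus> z \<otimes> u \<otimes> y) \<otimes> (\<one> \<ominus> z \<otimes> y) = (\<one> \<ominus> z \<otimes> y) \<oplus> z \<otimes> (u \<otimes> (\<one> \<ominus> y \<otimes> z)) \<otimes> y"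
    using assms(1-3) by (simp add: a_minus_def l_distr r_distr m_assoc r_minus l_minus minus_add a_ac)
  then show ?thesis
    using assms by (simp add: a_minus_def a_assoc l_neg)
qed

lemma jacobson_radical_mult_right:
  assumes x: "x \<in> jacobson_radical R" and b: "b \<in> carrier R"
  shows "x \<otimes> b \<in> jacobson_radical R"
proof (rule jacobson_radicalI_left_invertible)
  have xc: "x \<in> carrier R"
    using x jacobson_radical_subset_carrier by blast
  then show "x \<otimes> b \<in> carrier R"
    using b by simp
  fix a assume a: "a \<in> carrier R"
  obtain u where u: "u \<in> carrier R" "u \<otimes> (\<one> \<ominus> (b \<otimes> a) \<otimes> x) = \<one>"
    using jacobson_radical_left_invertible[OF x] a b by blast
  have "(\<one> \<oplus> (a \<otimes> x) \<otimes> u \<otimes> b) \<otimes> (\<one> \<ominus> (a \<otimes> x) \<otimes> b) = \<one>"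
    using a b xc u by (intro one_minus_left_invertible_swap) (simp_all add: m_assoc)
  then show "\<exists>v\<in>carrier R. v \<otimes> (\<one> \<ominus> a \<otimes> (x \<otimes> b)) = \<one>"
    using a b xc u(1) by (metis m_assoc m_closed add.m_closed one_closed)
qed

end

section \<open>The completion as a ring of compatible families\<close>

locale ideal_completion =
  fixes B :: "'a::ring_1 set set"
  assumes two_sided_ideal_B: "M \<in> B \<Longrightarrow> two_sided_ideal M"
begin

lemma two_sided_ideal_W: "I \<in> W B \<Longrightarrow> two_sided_ideal I"
  unfolding W_def using two_sided_ideal_ideal_prod_list two_sided_ideal_B by blast

lemma B_subset_W:
  assumes "M \<in> B"
  shows "M \<in> W B"
proof -
  have "ideal_prod_list [M] = M"
    using ideal_mult_UNIV_right[OF two_sided_ideal_B[OF assms]] by (simp add: ideal_prod_list_def)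
  then show ?thesis
    unfolding W_def using assms by (intro CollectI exI[of _ "[M]"]) simp
qed

definition residues :: "('a set \<Rightarrow> 'a) \<Rightarrow> 'a set \<Rightarrow> 'a set" where
  "residues f = (\<lambda>I. if I \<in> W B then coset_of I (f I) else {})"

definition compatible :: "('a set \<Rightarrow> 'a) \<Rightarrow> bool" where
  "compatible f \<longleftrightarrow> (\<forall>I\<in>W B. \<forall>J\<in>W B. I \<subseteq> J \<longrightarrow> f I - f J \<in> J)"

lemma residues_apply: "I \<in> W B \<Longrightarrow> residues f I = coset_of I (f I)"
  by (simp add: residues_def)

lemma residues_eq_iff: "residues f = residues g \<longleftrightarrow> (\<forall>I\<in>W B. f I - g I \<in> I)"
proof
  assume "residues f = residues g"
  then show "\<forall>I\<in>W B. f I - g I \<in> I"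
    by (metis residues_apply coset_of_eq_iff two_sided_ideal_W)
qed (unfold residues_def, intro ext, simp add: coset_of_eq_iff two_sided_ideal_W)

lemma carrier_completion: "carrier (completion B) = completion_carrier B"
  by (simp add: completion_def)

lemma residues_in_carrier: "compatible f \<Longrightarrow> residues f \<in> carrier (completion B)"
proof -
  assume f: "compatible f"
  have "residues f I \<subseteq> residues f J" if "I \<in> W B" "J \<in> W B" "I \<subseteq> J" for I J
  proof
    fix x assume "x \<in> residues f I"
    then have "x - f I \<in> J"
      using that by (auto simp: residues_def coset_of_def)
    moreover have "f I - f J \<in> J"
      using f that by (auto simp: compatible_def)
    ultimately have "(x - f I) + (f I - f J) \<in> J"
      using two_sided_ideal_add two_sided_ideal_W that by blast
    then show "x \<in> residues f J"
      using that by (simp add: residues_def coset_of_def)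
  qed
  then show ?thesis
    by (auto simp: carrier_completion completion_carrier_def residues_def)
qed

lemma carrier_completionE:
  assumes "c \<in> carrier (completion B)"
  obtains f where "c = residues f" "compatible f"
proof -
  define f where "f I = (SOME a. c I = coset_of I a)" for I
  have cf: "c I = coset_of I (f I)" if "I \<in> W B" for I
    unfolding f_def
    by (rule someI_ex) (use assms that in \<open>auto simp: carrier_completion completion_carrier_def\<close>)
  have "c = residues f"
    using assms cf by (intro ext) (simp add: residues_def carrier_completion completion_carrier_def)
  moreover have "compatible f"
    unfolding compatible_def
  proof (intro ballI impI)
    fix I J assume IJ: "I \<in> W B" "J \<in> W B" "I \<subseteq> J"
    have "f I \<in> c I"
      using cf[OF IJ(1)] two_sided_ideal_zero[OF two_sided_ideal_W[OF IJ(1)]] by (simp add: coset_of_def)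
    also have "c I \<subseteq> c J"
      using assms IJ by (auto simp: carrier_completion completion_carrier_def)
    finally show "f I - f J \<in> J"
      using cf[OF IJ(2)] by (simp add: coset_of_def)
  qed
  ultimately show ?thesis
    using that by blast
qed

lemma add_residues: "residues f \<oplus>\<^bsub>completion B\<^esub> residues g = residues (\<lambda>I. f I + g I)"
  unfolding completion_def residues_def by (intro ext) (simp add: coset_of_add two_sided_ideal_W)

lemma mult_residues: "residues f \<otimes>\<^bsub>completion B\<^esub> residues g = residues (\<lambda>I. f I * g I)"
  unfolding completion_def residues_def by (intro ext) (simp add: coset_of_mult two_sided_ideal_W)

lemma one_completion: "\<one>\<^bsub>completion B\<^esub> = residues (\<lambda>_. 1)"
  by (simp add: completion_def residues_def)

lemma zero_completion: "\<zero>\<^bsub>completion B\<^esub> = residues (\<lambda>_. 0)"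
  by (simp add: completion_def residues_def)

lemma compatible_const: "compatible (\<lambda>_. x)"
  by (simp add: compatible_def two_sided_ideal_zero two_sided_ideal_W)

lemma compatible_add:
  assumes "compatible f" "compatible g"
  shows "compatible (\<lambda>I. f I + g I)"
  unfolding compatible_def
proof (intro ballI impI)
  fix I J assume IJ: "I \<in> W B" "J \<in> W B" "I \<subseteq> J"
  then have "(f I - f J) + (g I - g J) \<in> J"
    using assms unfolding compatible_def by (intro two_sided_ideal_add two_sided_ideal_W) auto
  then show "f I + g I - (f J + g J) \<in> J"
    by (simp add: algebra_simps)
qed

lemma compatible_uminus:
  assumes "compatible f"
  shows "compatible (\<lambda>I. - f I)"
  unfolding compatible_def
proof (intro ballI impI)
  fix I J assume IJ: "I \<in> W B" "J \<in> W B" "I \<subseteq> J"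
  then have "- (f I - f J) \<in> J"
    using assms unfolding compatible_def by (intro two_sided_ideal_uminus two_sided_ideal_W) auto
  then show "- f I - - f J \<in> J"
    by (simp add: algebra_simps)
qed

lemma compatible_mult:
  assumes "compatible f" "compatible g"
  shows "compatible (\<lambda>I. f I * g I)"
  unfolding compatible_def
proof (intro ballI impI)
  fix I J assume IJ: "I \<in> W B" "J \<in> W B" "I \<subseteq> J"
  then have "(f I - f J) * g I + f J * (g I - g J) \<in> J"
    using assms unfolding compatible_def
    by (intro two_sided_ideal_add two_sided_ideal_mult_left two_sided_ideal_mult_right two_sided_ideal_W) auto
  then show "f I * g I - f J * g J \<in> J"
    by (simp add: algebra_simps)
qed

lemma ring_completion: "ring (completion B)"
proof (rule ringI)
  note residues_simps = add_residues mult_residues zero_completion one_completion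
  show "abelian_group (completion B)"
  proof (rule abelian_groupI)
    fix x assume "x \<in> carrier (completion B)"
    then obtain f where "x = residues f" "compatible f"
      by (rule carrier_completionE)
    then show "\<exists>y\<in>carrier (completion B). y \<oplus>\<^bsub>completion B\<^esub> x = \<zero>\<^bsub>completion B\<^esub>"
      by (intro bexI[of _ "residues (\<lambda>I. - f I)"])
        (simp_all add: residues_simps residues_in_carrier compatible_uminus)
  qed (auto elim!: carrier_completionE simp: residues_simps algebra_simps
      intro!: residues_in_carrier compatible_add compatible_const)
  show "monoid (completion B)"
    by (rule monoidI) (auto elim!: carrier_completionE simp: residues_simps mult.assoc
        intro!: residues_in_carrier compatible_mult compatible_const)
qed (auto elim!: carrier_completionE simp: add_residues mult_residues algebra_simps)

end

section \<open>The Jacobson radical of the completion\<close>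

sublocale ideal_completion \<subseteq> completion: ring "completion B"
  by (rule ring_completion)

context ideal_completion
begin

lemma minus_residues:
  assumes "compatible f" "compatible g"
  shows "residues f \<ominus>\<^bsub>completion B\<^esub> residues g = residues (\<lambda>I. f I - g I)"
proof -
  have "\<ominus>\<^bsub>completion B\<^esub> residues g = residues (\<lambda>I. - g I)"
    using assms by (intro completion.minus_equality)
      (simp_all add: add_residues zero_completion residues_in_carrier compatible_uminus)
  then show ?thesis
    by (simp add: a_minus_def add_residues)
qed

lemma nilpotent_modulo_W:
  assumes g: "compatible g" "\<And>M. M \<in> B \<Longrightarrow> g M \<in> M" and I: "I \<in> W B"
  obtains N where "g I ^ N \<in> I"
proof -
  obtain ms where ms: "I = ideal_prod_list ms" "set ms \<subseteq> B"
    using I unfolding W_def by blast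
  have "g I \<in> M" if M: "M \<in> set ms" for M
  proof -
    have "M \<in> B"
      using M ms(2) by blast
    moreover have "I \<subseteq> M"
      using ideal_prod_list_subset[OF _ M] ms two_sided_ideal_B by blast
    ultimately have "g I - g M \<in> M" "g M \<in> M"
      using g I B_subset_W unfolding compatible_def by blast+
    then show "g I \<in> M"
      using two_sided_ideal_add[OF two_sided_ideal_B[OF \<open>M \<in> B\<close>]] by fastforce
  qed
  then show ?thesis
    using that power_in_ideal_prod_list ms(1) by blast
qed

lemma residues_one_minus_left_invertible:
  assumes g: "compatible g" "\<And>M. M \<in> B \<Longrightarrow> g M \<in> M"
  shows "\<exists>u\<in>carrier (completion B). u \<otimes>\<^bsub>completion B\<^esub> residues (\<lambda>I. 1 - g I) = \<one>\<^bsub>completion B\<^esub>"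
proof -
  \<comment> \<open>The inverses \<open>s I\<close> are compatible because a left inverse modulo \<open>J\<close> agrees with a
    right inverse modulo \<open>J\<close>.\<close>
  define N where "N I = (SOME N. g I ^ N \<in> I)" for I
  have N: "g I ^ N I \<in> I" if "I \<in> W B" for I
    unfolding N_def by (rule someI_ex) (use nilpotent_modulo_W[OF g that] in blast)
  define s where "s I = (\<Sum>j<N I. g I ^ j)" for I
  have s_right: "s I * (1 - g I) - 1 \<in> I" and s_left: "(1 - g I) * s I - 1 \<in> I"
    if "I \<in> W B" for I
    using two_sided_ideal_uminus[OF two_sided_ideal_W N, OF that that]
    by (simp_all add: s_def geometric_sum_mult_right geometric_sum_mult_left)
  have "compatible s"
    unfolding compatible_def
  proof (intro ballI impI)
    fix I J assume IJ: "I \<in> W B" "J \<in> W B" "I \<subseteq> J"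
    have "(s I * (1 - g I) - 1) + s I * (g I - g J) \<in> J"
      using s_right[OF IJ(1)] g(1) IJ unfolding compatible_def
      by (intro two_sided_ideal_add two_sided_ideal_mult_left two_sided_ideal_W) auto
    then have "s I * (1 - g J) - 1 \<in> J"
      by (simp add: algebra_simps)
    then show "s I - s J \<in> J"
      by (rule left_right_inverse_mod_eq[OF two_sided_ideal_W[OF IJ(2)] _ s_left[OF IJ(2)]])
  qed
  moreover have "residues s \<otimes>\<^bsub>completion B\<^esub> residues (\<lambda>I. 1 - g I) = \<one>\<^bsub>completion B\<^esub>"
    using s_right by (simp add: mult_residues one_completion residues_eq_iff)
  ultimately show ?thesis
    using residues_in_carrier by blast
qed

lemma residues_at_B_eq_zero_iff:
  "M \<in> B \<Longrightarrow> residues f M = coset_of M 0 \<longleftrightarrow> f M \<in> M"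
  by (simp add: residues_apply B_subset_W coset_of_eq_iff two_sided_ideal_B)

lemma in_jacobson_radical_if_in_kernels:
  assumes c: "c \<in> carrier (completion B)" and ker: "\<And>M. M \<in> B \<Longrightarrow> c M = coset_of M 0"
  shows "c \<in> jacobson_radical (completion B)"
proof (rule completion.jacobson_radicalI_left_invertible[OF c])
  obtain f where f: "c = residues f" "compatible f"
    using c by (rule carrier_completionE)
  fix a assume "a \<in> carrier (completion B)"
  then obtain g where g: "a = residues g" "compatible g"
    by (rule carrier_completionE)
  have "\<one>\<^bsub>completion B\<^esub> \<ominus>\<^bsub>completion B\<^esub> a \<otimes>\<^bsub>completion B\<^esub> c = residues (\<lambda>I. 1 - g I * f I)"
    using f g by (simp add: one_completion mult_residues minus_residues compatible_const compatible_mult)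
  moreover have "g M * f M \<in> M" if "M \<in> B" for M
    using ker[OF that] that f(1) two_sided_ideal_B
    by (simp add: residues_at_B_eq_zero_iff two_sided_ideal_mult_left)
  ultimately show "\<exists>u\<in>carrier (completion B).
      u \<otimes>\<^bsub>completion B\<^esub> (\<one>\<^bsub>completion B\<^esub> \<ominus>\<^bsub>completion B\<^esub> a \<otimes>\<^bsub>completion B\<^esub> c) = \<one>\<^bsub>completion B\<^esub>"
    using residues_one_minus_left_invertible[of "\<lambda>I. g I * f I"] f g compatible_mult by simp
qed

lemma compatible_sandwich_sum:
  assumes "compatible f"
  shows "compatible (\<lambda>I. \<Sum>i<(k::nat). x i * f I * y i)"
proof (induction k)
  case 0
  then show ?case
    using compatible_const[of 0] by simp
next
  case (Suc k)
  have "compatible (\<lambda>I. x k * f I * y k)"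
    using assms by (intro compatible_mult compatible_const)
  then show ?case
    using compatible_add[OF Suc.IH] by simp
qed

lemma jacobson_radical_sandwich_sum:
  assumes "residues f \<in> jacobson_radical (completion B)"
  shows "residues (\<lambda>I. \<Sum>i<(k::nat). x i * f I * y i) \<in> jacobson_radical (completion B)"
proof (induction k)
  case 0
  then show ?case
    using completion.jacobson_radical_zero by (simp add: zero_completion)
next
  case (Suc k)
  have "residues (\<lambda>_. x k) \<otimes>\<^bsub>completion B\<^esub> residues f \<otimes>\<^bsub>completion B\<^esub> residues (\<lambda>_. y k)
      \<in> jacobson_radical (completion B)"
    using assms residues_in_carrier[OF compatible_const]
    by (intro completion.jacobson_radical_mult_right completion.jacobson_radical_mult_left)
  then have "residues (\<lambda>I. \<Sum>i<k. x i * f I * y i) \<oplus>\<^bsub>completion B\<^esub> residues (\<lambda>I. x k * f I * y k)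
      \<in> jacobson_radical (completion B)"
    using completion.jacobson_radical_add[OF Suc.IH] by (simp add: mult_residues)
  then show ?case
    by (simp add: add_residues)
qed

lemma residues_not_left_invertible:
  assumes M: "M \<in> B" "M \<noteq> UNIV" and g: "g M \<in> M" and u: "u \<in> carrier (completion B)"
  shows "u \<otimes>\<^bsub>completion B\<^esub> residues g \<noteq> \<one>\<^bsub>completion B\<^esub>"
proof
  assume inverse: "u \<otimes>\<^bsub>completion B\<^esub> residues g = \<one>\<^bsub>completion B\<^esub>"
  obtain v where "u = residues v"
    using u by (rule carrier_completionE)
  then have "residues (\<lambda>I. v I * g I) = residues (\<lambda>_. 1)"
    using inverse by (simp add: mult_residues one_completion)
  then have "v M * g M - 1 \<in> M"
    using M(1) B_subset_W by (simp add: residues_eq_iff)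
  moreover have "v M * g M \<in> M"
    using two_sided_ideal_mult_left[OF two_sided_ideal_B[OF M(1)] g] .
  ultimately have "v M * g M - (v M * g M - 1) \<in> M"
    using two_sided_ideal_diff[OF two_sided_ideal_B[OF M(1)]] by blast
  then show False
    using M(2) two_sided_ideal_eq_UNIV_iff[OF two_sided_ideal_B[OF M(1)]] by simp
qed

lemma jacobson_radical_in_kernel:
  assumes c: "c \<in> jacobson_radical (completion B)" and M: "M \<in> B" "maximal_two_sided_ideal M"
  shows "c M = coset_of M 0"
proof -
  obtain f where f: "c = residues f" "compatible f"
    using c completion.jacobson_radical_subset_carrier by (blast elim: carrier_completionE)
  have "f M \<in> M"
  proof (rule ccontr)
    assume "f M \<notin> M"
    then obtain m k x y where m: "m \<in> M" "1 = m + (\<Sum>i<(k::nat). x i * f M * y i)"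
      by (rule maximal_two_sided_ideal_generates_one[OF M(2)])
    define h where "h I = (\<Sum>i<k. x i * f I * y i)" for I
    have "compatible h"
      unfolding h_def by (rule compatible_sandwich_sum[OF f(2)])
    moreover have "residues h \<in> jacobson_radical (completion B)"
      unfolding h_def using c f(1) by (intro jacobson_radical_sandwich_sum) simp
    ultimately obtain u where "u \<in> carrier (completion B)"
      "u \<otimes>\<^bsub>completion B\<^esub> residues (\<lambda>I. 1 - h I) = \<one>\<^bsub>completion B\<^esub>"
      using completion.jacobson_radical_one_minus_left_invertible[of "residues h"]
      by (auto simp: one_completion minus_residues compatible_const)
    moreover have "1 - h M \<in> M"
      unfolding h_def m(2) using m(1) by simp
    moreover have "M \<noteq> UNIV"
      using M(2) unfolding maximal_two_sided_ideal_def by blast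
    ultimately show False
      using residues_not_left_invertible[OF M(1), of "\<lambda>I. 1 - h I"] by blast
  qed
  then show ?thesis
    using M(1) f(1) by (simp add: residues_at_B_eq_zero_iff)
qed

end

theorem jacobson_radical_completion:
  assumes "\<And>M. M \<in> B \<Longrightarrow> maximal_two_sided_ideal M"
  shows "jacobson_radical (completion B) = completion_carrier B \<inter> (\<Inter>M\<in>B. proj_kernel B M)"
proof -
  interpret ideal_completion B
    using assms unfolding maximal_two_sided_ideal_def by unfold_locales blast
  show ?thesis
  proof (intro equalityI subsetI)
    fix c assume c: "c \<in> jacobson_radical (completion B)"
    then have "c \<in> completion_carrier B"
      by (simp add: jacobson_radical_def carrier_completion)
    then show "c \<in> completion_carrier B \<inter> (\<Inter>M\<in>B. proj_kernel B M)"
      using jacobson_radical_in_kernel[OF c] assms by (simp add: proj_kernel_def proj_def)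
  next
    fix c assume "c \<in> completion_carrier B \<inter> (\<Inter>M\<in>B. proj_kernel B M)"
    then show "c \<in> jacobson_radical (completion B)"
      by (intro in_jacobson_radical_if_in_kernels) (auto simp: proj_kernel_def proj_def carrier_completion)
  qed
qed

theorem mainTheorem20:
  fixes scale :: "'k::field \<Rightarrow> 'a::ring_1 \<Rightarrow> 'a"
    and r :: "('a set \<times> 'a set) set"
    and B :: "'a set set"
  assumes "k_algebra scale"
    and "equiv (cfs scale) r"
    and "B \<in> cfs scale // r"
  shows "jacobson_radical (completion B) =
           completion_carrier B \<inter> (\<Inter>M\<in>B. proj_kernel B M)"
proof -
  have "B \<subseteq> cfs scale"
    using assms(2,3) by (rule in_quotient_imp_subset)
  then have "\<And>M. M \<in> B \<Longrightarrow> maximal_two_sided_ideal M"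
    by (auto simp: cfs_def)
  then show ?thesis
    by (rule jacobson_radical_completion)
qed

end
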